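(* Let $K$ be a field, $\vartheta$ any one of the four types (left, right, pre-two-sided, two-sided), and $\mathcal A$ a $K$-algebra. Then $\mathcal A$ is $\vartheta$-stable if and only if one of the following holds: (1) $\mathcal A=K$ (i.e., $\mathcal A=K\cdot 1$); (2) $K\simeq\mathbb Z/2\mathbb Z$ and $\mathcal A\simeq\mathbb Z/2\mathbb Z\times\mathbb Z/2\mathbb Z$ (product algebra).
   Context: Algebras are associative, unital and nonzero. A $\vartheta$-ideal is a left ideal if $\vartheta$ = left, a right ideal if $\vartheta$ = right, and a two-sided ideal if $\vartheta$ is pre-two-sided or two-sided. $\mathcal A$ is $\vartheta$-stable if every $K$-subspace $V$ of $\mathcal A$ with $1\notin V$ is a $\vartheta$-ideal of $\mathcal A$. *)

theory Defs
  imports Main "HOL.Vector_Spaces" "HOL-Library.Z2"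
begin

datatype ideal_type = Left | Right | PreTwoSided | TwoSided

text \<open>Nonzero-ness and unitality are built into the class ring_1.\<close>
definition is_algebra :: "('k::field \<Rightarrow> 'a::ring_1 \<Rightarrow> 'a) \<Rightarrow> bool" where
  "is_algebra scale \<longleftrightarrow> vector_space scale \<and>
     (\<forall>c x y. scale c (x * y) = scale c x * y \<and> scale c (x * y) = x * scale c y)"

definition left_ideal :: "'a::ring_1 set \<Rightarrow> bool" where
  "left_ideal V \<longleftrightarrow> 0 \<in> V \<and> (\<forall>x\<in>V. \<forall>y\<in>V. x + y \<in> V) \<and> (\<forall>x\<in>V. - x \<in> V)
     \<and> (\<forall>a. \<forall>x\<in>V. a * x \<in> V)"

definition right_ideal :: "'a::ring_1 set \<Rightarrow> bool" where
  "right_ideal V \<longleftrightarrow> 0 \<in> V \<and> (\<forall>x\<in>V. \<forall>y\<in>V. x + y \<in> V) \<and> (\<forall>x\<in>V. - x \<in> V)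
     \<and> (\<forall>a. \<forall>x\<in>V. x * a \<in> V)"

definition two_sided_ideal :: "'a::ring_1 set \<Rightarrow> bool" where
  "two_sided_ideal V \<longleftrightarrow> left_ideal V \<and> right_ideal V"

fun theta_ideal :: "ideal_type \<Rightarrow> 'a::ring_1 set \<Rightarrow> bool" where
  "theta_ideal Left V = left_ideal V"
| "theta_ideal Right V = right_ideal V"
| "theta_ideal PreTwoSided V = two_sided_ideal V"
| "theta_ideal TwoSided V = two_sided_ideal V"

definition theta_stable :: "ideal_type \<Rightarrow> ('k::field \<Rightarrow> 'a::ring_1 \<Rightarrow> 'a) \<Rightarrow> bool" where
  "theta_stable \<theta> scale \<longleftrightarrow>
     (\<forall>V. module.subspace scale V \<and> (1::'a) \<notin> V \<longrightarrow> theta_ideal \<theta> V)"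

definition field_iso_Z2 :: "('k::field \<Rightarrow> bit) \<Rightarrow> bool" where
  "field_iso_Z2 \<psi> \<longleftrightarrow> bij \<psi> \<and> (\<forall>x y. \<psi> (x + y) = \<psi> x + \<psi> y) \<and>
     (\<forall>x y. \<psi> (x * y) = \<psi> x * \<psi> y) \<and> \<psi> 1 = 1"

definition alg_iso_Z2xZ2 ::
  "('k::field \<Rightarrow> 'a::ring_1 \<Rightarrow> 'a) \<Rightarrow> ('k \<Rightarrow> bit) \<Rightarrow> ('a \<Rightarrow> bit \<times> bit) \<Rightarrow> bool" where
  "alg_iso_Z2xZ2 scale \<psi> \<phi> \<longleftrightarrow> bij \<phi> \<and>
     (\<forall>x y. \<phi> (x + y) = (fst (\<phi> x) + fst (\<phi> y), snd (\<phi> x) + snd (\<phi> y))) \<and>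
     (\<forall>x y. \<phi> (x * y) = (fst (\<phi> x) * fst (\<phi> y), snd (\<phi> x) * snd (\<phi> y))) \<and>
     \<phi> 1 = (1, 1) \<and>
     (\<forall>c x. \<phi> (scale c x) = (\<psi> c * fst (\<phi> x), \<psi> c * snd (\<phi> x)))"

end

theory Submission
  imports Defs
begin

(* If A is not K, pick x outside K = span {1}. A line K u with u outside K misses 1, so stability
  makes it a one-sided ideal; in particular x (x - mu) lies in K (x - mu) for every scalar mu.
  Writing x * x = l x and comparing coefficients with respect to the independent vectors 1 and x
  gives (l - mu) mu = 0 for all mu, so l = 1 and K = {0, 1}. Then x is idempotent, and
  y = y x + y (1 - x) (or its mirror image for right ideals) with y x in {0, x} and
  y (1 - x) in {0, 1 - x} shows A = {0, 1, x, 1 - x}, the product F2 x F2. Conversely, in K every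
  subspace without 1 is zero, and in F2 x F2 every element v other than 1 satisfies
  a v, v a in {0, v}. *)

definition theta_mult :: "ideal_type \<Rightarrow> 'a::ring_1 \<Rightarrow> 'a \<Rightarrow> 'a" where
  "theta_mult \<theta> a v = (if \<theta> = Right then v * a else a * v)"

lemma theta_ideal_theta_mult: "theta_ideal \<theta> V \<Longrightarrow> v \<in> V \<Longrightarrow> theta_mult \<theta> a v \<in> V"
  by (cases \<theta>) (auto simp: theta_mult_def left_ideal_def right_ideal_def two_sided_ideal_def)

lemma theta_mult_add: "theta_mult \<theta> a (u + v) = theta_mult \<theta> a u + theta_mult \<theta> a v"
  by (simp add: theta_mult_def algebra_simps)

lemma theta_mult_diff: "theta_mult \<theta> a (u - v) = theta_mult \<theta> a u - theta_mult \<theta> a v"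
  by (simp add: theta_mult_def algebra_simps)

lemma theta_mult_one [simp]: "theta_mult \<theta> a 1 = a"
  by (simp add: theta_mult_def)

lemma theta_mult_self [simp]: "theta_mult \<theta> v v = v * v"
  by (simp add: theta_mult_def)

lemma one_add_one_eq_0_if_two_elements:
  assumes "\<forall>c::'k::field. c = 0 \<or> c = 1"
  shows "(1::'k) + 1 = 0"
  using assms[rule_format, of "1 + 1"] by (metis add_cancel_right_right zero_neq_one)

lemma field_iso_Z2_if_two_elements:
  assumes "\<forall>c::'k::field. c = 0 \<or> c = 1"
  shows "field_iso_Z2 (\<lambda>c::'k. if c = 0 then 0 else 1)"
proof -
  have "bij (\<lambda>c::'k. if c = 0 then 0 else (1::bit))"
  proof (rule bijI)
    show "inj (\<lambda>c::'k. if c = 0 then 0 else (1::bit))"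
    proof (rule injI)
      fix a b :: 'k
      assume "(if a = 0 then 0 else 1) = (if b = 0 then 0 else (1::bit))"
      then show "a = b"
        using assms[rule_format, of a] assms[rule_format, of b] by (auto split: if_splits)
    qed
    show "surj (\<lambda>c::'k. if c = 0 then 0 else (1::bit))"
      by (rule surjI[where f = "\<lambda>y. if y = 0 then 0 else 1"]) simp
  qed
  moreover note one_add_one_eq_0_if_two_elements[OF assms]
  ultimately show ?thesis
    unfolding field_iso_Z2_def
  proof (intro conjI allI)
    fix a b :: 'k
    show "(if a + b = 0 then 0 else 1) = (if a = 0 then 0 else 1) + (if b = 0 then 0 else (1::bit))"
      using assms[rule_format, of a] assms[rule_format, of b] \<open>1 + 1 = 0\<close> by auto
    show "(if a * b = 0 then 0 else 1) = (if a = 0 then 0 else 1) * (if b = 0 then 0 else (1::bit))"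
      using assms[rule_format, of a] assms[rule_format, of b] by auto
  qed simp_all
qed

locale K_algebra = vector_space scale for scale :: "'k::field \<Rightarrow> 'a::ring_1 \<Rightarrow> 'a" (infixr "*s" 75) +
  assumes scale_mult_left: "c *s (x * y) = (c *s x) * y"
    and scale_mult_right: "c *s (x * y) = x * (c *s y)"

lemma is_algebra_iff_K_algebra: "is_algebra scale \<longleftrightarrow> K_algebra scale"
  by (auto simp: is_algebra_def K_algebra_def K_algebra_axioms_def)

context K_algebra
begin

lemma theta_mult_scale: "theta_mult \<theta> a (c *s v) = c *s theta_mult \<theta> a v"
  using scale_mult_left[of c v a] scale_mult_right[of c a v] by (simp add: theta_mult_def)

lemma theta_ideal_if_mult_closed:
  assumes "subspace V" and "\<And>a v. v \<in> V \<Longrightarrow> a * v \<in> V \<and> v * a \<in> V"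
  shows "theta_ideal \<theta> V"
  using assms subspace_0 subspace_add subspace_neg
  by (cases \<theta>) (auto simp: left_ideal_def right_ideal_def two_sided_ideal_def)

lemma theta_stable_if_span_one:
  assumes "span {1} = UNIV"
  shows "theta_stable \<theta> scale"
  unfolding theta_stable_def
proof (intro allI impI)
  fix V assume V: "subspace V \<and> 1 \<notin> V"
  have "V \<subseteq> {0}"
  proof
    fix v assume "v \<in> V"
    with V have "span {v} \<subseteq> V"
      by (simp add: span_minimal)
    moreover have "v \<noteq> 0 \<Longrightarrow> 1 \<in> span {v}"
      using in_span_insert[of v 1 "{}"] assms by auto
    ultimately show "v \<in> {0}"
      using V by auto
  qed
  with V show "theta_ideal \<theta> V"
    by (intro theta_ideal_if_mult_closed) auto
qed

lemma theta_stable_if_iso_Z2xZ2: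
  assumes "alg_iso_Z2xZ2 scale \<psi> \<phi>"
  shows "theta_stable \<theta> scale"
  unfolding theta_stable_def
proof (intro allI impI)
  have inj: "inj \<phi>"
    and add: "\<And>x y. \<phi> (x + y) = (fst (\<phi> x) + fst (\<phi> y), snd (\<phi> x) + snd (\<phi> y))"
    and mult: "\<And>x y. \<phi> (x * y) = (fst (\<phi> x) * fst (\<phi> y), snd (\<phi> x) * snd (\<phi> y))"
    and one: "\<phi> 1 = (1, 1)"
    using assms unfolding alg_iso_Z2xZ2_def bij_def by auto
  have zero: "\<phi> 0 = (0, 0)"
    using add[of 0 0] by (cases "\<phi> 0") auto
  have absorb: "a * v \<in> {0, v} \<and> v * a \<in> {0, v}" if "v \<noteq> 1" for a v :: 'a
  proof -
    have "\<phi> v \<noteq> (1, 1)" using that one inj by (metis injD)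
    then have "\<phi> (a * v) \<in> {\<phi> 0, \<phi> v} \<and> \<phi> (v * a) \<in> {\<phi> 0, \<phi> v}"
      unfolding mult zero
      by (cases "\<phi> v"; cases "\<phi> a") auto
    then show ?thesis using inj by (auto dest: injD)
  qed
  fix V assume V: "subspace V \<and> 1 \<notin> V"
  show "theta_ideal \<theta> V"
  proof (rule theta_ideal_if_mult_closed)
    show "subspace V" using V by blast
    fix a v assume "v \<in> V"
    with V have "v \<noteq> 1" by blast
    then show "a * v \<in> V \<and> v * a \<in> V"
      using absorb[of v a] \<open>v \<in> V\<close> V subspace_0 by auto
  qed
qed

lemma one_notin_span_singleton:
  assumes "u \<notin> span {1}"
  shows "1 \<notin> span {u}"
  using in_span_insert[of 1 u "{}"] assms by auto

lemma scale_notin_span_one: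
  assumes "x \<notin> span {1}" and "a \<noteq> 0"
  shows "a *s x \<notin> span {1}"
proof
  assume "a *s x \<in> span {1}"
  then have "inverse a *s (a *s x) \<in> span {1}"
    by (rule span_scale)
  with assms show False
    by simp
qed

lemma theta_mult_in_span_if_stable:
  assumes "theta_stable \<theta> scale" and "u \<notin> span {1}"
  shows "theta_mult \<theta> a u \<in> span {u}"
proof -
  have "theta_ideal \<theta> (span {u})"
    using assms one_notin_span_singleton unfolding theta_stable_def by blast
  then show ?thesis
    by (rule theta_ideal_theta_mult) (simp add: span_base)
qed

lemma theta_stable_idempotent_and_scalars_zero_one:
  fixes c :: 'k
  assumes stable: "theta_stable \<theta> scale" and x: "x \<notin> span {1}"
  shows "x * x = x" and "c = 0 \<or> c = 1"
proof -
  obtain l where l: "x * x = l *s x"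
    using theta_mult_in_span_if_stable[OF assms, of x] by (auto simp: span_singleton)
  have "(l - \<mu>) * \<mu> = 0" for \<mu>
  proof -
    have u: "x - \<mu> *s 1 \<notin> span {1}"
      using x span_add[of "x - \<mu> *s 1" "{1}" "\<mu> *s 1"] by (auto simp: span_base span_scale)
    obtain \<nu> where \<nu>: "theta_mult \<theta> x (x - \<mu> *s 1) = \<nu> *s (x - \<mu> *s 1)"
      using theta_mult_in_span_if_stable[OF stable u, of x] by (auto simp: span_singleton)
    have "theta_mult \<theta> x (x - \<mu> *s 1) = l *s x - \<mu> *s x"
      by (simp add: theta_mult_diff theta_mult_scale l)
    with \<nu> have "(l - \<mu> - \<nu>) *s x = - (\<nu> * \<mu>) *s 1"
      by (simp add: algebra_simps)
    then have "l - \<mu> - \<nu> = 0"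
      using scale_notin_span_one[OF x] by (metis span_base span_scale singletonI)
    with \<open>(l - \<mu> - \<nu>) *s x = - (\<nu> * \<mu>) *s 1\<close> show ?thesis
      by simp
  qed
  from this[of 1] have "l = 1"
    by simp
  with l show "x * x = x"
    by simp
  from \<open>l = 1\<close> \<open>(l - c) * c = 0\<close> show "c = 0 \<or> c = 1"
    by auto
qed

lemma theta_stable_element_cases:
  assumes stable: "theta_stable \<theta> scale" and x: "x \<notin> span {1}"
  shows "y \<in> {0, 1, x, 1 - x}"
proof -
  have scalars: "(UNIV :: 'k set) = {0, 1}"
    using theta_stable_idempotent_and_scalars_zero_one(2)[OF assms] by blast
  have span_singleton_eq: "span {u} = {0, u}" for u
    by (simp only: span_singleton scalars) simp
  have "1 - x \<notin> span {1}"
    using x span_diff[of 1 "{1}" "1 - x"] by (auto simp: span_base)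
  then have "theta_mult \<theta> y (1 - x) \<in> {0, 1 - x}" and "theta_mult \<theta> y x \<in> {0, x}"
    using theta_mult_in_span_if_stable[OF stable] x span_singleton_eq by blast+
  moreover have "y = theta_mult \<theta> y x + theta_mult \<theta> y (1 - x)"
    by (simp flip: theta_mult_add)
  ultimately show ?thesis
    by auto
qed

lemma add_self_eq_0_if_two_scalars:
  fixes v :: 'a
  assumes "\<forall>c::'k. c = 0 \<or> c = 1"
  shows "v + v = 0"
proof -
  have "v + v = (1 + 1) *s v"
    by (simp only: scale_left_distrib scale_one)
  also have "\<dots> = 0"
    by (simp only: one_add_one_eq_0_if_two_elements[OF assms] scale_zero_left)
  finally show ?thesis .
qed

lemma alg_iso_Z2xZ2_if_four_elements:
  assumes K2: "\<forall>c::'k. c = 0 \<or> c = 1" and idem: "x * x = x" and "x \<noteq> 0" "x \<noteq> 1"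
    and elements: "\<And>y. y \<in> {0, 1, x, 1 - x}"
  shows "alg_iso_Z2xZ2 scale (\<lambda>c. if c = 0 then 0 else 1)
    (\<lambda>y. (if y = x \<or> y = 1 then 1 else 0, if y = 1 - x \<or> y = 1 then 1 else 0))"
    (is "alg_iso_Z2xZ2 scale ?\<psi> ?\<phi>")
proof -
  have char2: "v + v = 0" for v :: 'a
    by (rule add_self_eq_0_if_two_scalars[OF K2])
  have "x \<noteq> 1 - x"
  proof
    assume "x = 1 - x"
    then have "x + x = 1" by (simp add: eq_diff_eq)
    with char2 show False by simp
  qed
  with assms have distinct: "(0::'a) \<noteq> 1" "x \<noteq> 0" "x \<noteq> 1" "1 - x \<noteq> 0" "1 - x \<noteq> 1" "x \<noteq> 1 - x"
    by auto
  have minus_x: "- x = x"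
    using char2[of x] by (rule minus_unique)
  have sums: "x + (1 - x) = 1" "(1 - x) + x = 1" "1 + x = 1 - x" "x + 1 = 1 - x"
      "1 + (1 - x) = x" "(1 - x) + 1 = x"
    using char2[of 1] char2[of x] minus_x by (simp_all add: algebra_simps)
  have products: "x * (1 - x) = 0" "(1 - x) * x = 0" "(1 - x) * (1 - x) = 1 - x"
    using idem by (simp_all add: algebra_simps)
  have images: "?\<phi> 0 = (0, 0)" "?\<phi> 1 = (1, 1)" "?\<phi> x = (1, 0)" "?\<phi> (1 - x) = (0, 1)"
    using distinct by simp_all
  show ?thesis
    unfolding alg_iso_Z2xZ2_def
  proof (intro conjI allI)
    show "bij ?\<phi>"
    proof (rule bijI)
      show "inj ?\<phi>"
      proof (rule injI)
        fix a b
        assume "?\<phi> a = ?\<phi> b"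
        then show "a = b"
          using elements[of a] elements[of b] distinct by auto
      qed
      show "surj ?\<phi>"
      proof (rule surjI)
        fix p :: "bit \<times> bit"
        show "?\<phi> (if p = (1, 1) then 1 else if p = (1, 0) then x else if p = (0, 1) then 1 - x else 0) = p"
          using images by (cases p) auto
      qed
    qed
  next
    fix a b
    show "?\<phi> (a + b) = (fst (?\<phi> a) + fst (?\<phi> b), snd (?\<phi> a) + snd (?\<phi> b))"
      using elements[of a] elements[of b] distinct char2 sums by auto
    show "?\<phi> (a * b) = (fst (?\<phi> a) * fst (?\<phi> b), snd (?\<phi> a) * snd (?\<phi> b))"
      using elements[of a] elements[of b] distinct idem products by auto
  next
    fix c a
    show "?\<phi> (c *s a) = (?\<psi> c * fst (?\<phi> a), ?\<psi> c * snd (?\<phi> a))"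
      using K2 elements[of a] distinct by auto
  qed (use images in simp)
qed

end

theorem proposition7p13:
  fixes scale :: "'k::field \<Rightarrow> 'a::ring_1 \<Rightarrow> 'a" and \<theta> :: ideal_type
  assumes "is_algebra scale"
  shows "theta_stable \<theta> scale \<longleftrightarrow>
           ((\<forall>x::'a. \<exists>c::'k. x = scale c 1) \<or>
            (\<exists>\<psi> \<phi>. field_iso_Z2 \<psi> \<and> alg_iso_Z2xZ2 scale \<psi> \<phi>))"
proof -
  interpret K_algebra scale
    using assms by (simp add: is_algebra_iff_K_algebra)
  have scalar_algebra: "(\<forall>x::'a. \<exists>c::'k. x = scale c 1) \<longleftrightarrow> span {1} = UNIV"
    by (auto simp: span_singleton)
  show ?thesis
  proof
    assume stable: "theta_stable \<theta> scale"
    show "(\<forall>x::'a. \<exists>c::'k. x = scale c 1) \<or>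
      (\<exists>\<psi> \<phi>. field_iso_Z2 \<psi> \<and> alg_iso_Z2xZ2 scale \<psi> \<phi>)"
    proof (cases "span {1} = UNIV")
      case False
      then obtain x where x: "x \<notin> span {1}"
        by blast
      have K2: "\<forall>c::'k. c = 0 \<or> c = 1"
        using theta_stable_idempotent_and_scalars_zero_one(2)[OF stable x] by blast
      have "x \<noteq> 0" "x \<noteq> 1"
        using x by (auto simp: span_zero span_base)
      with K2 theta_stable_idempotent_and_scalars_zero_one(1)[OF stable x] theta_stable_element_cases[OF stable x]
      have "alg_iso_Z2xZ2 scale (\<lambda>c. if c = 0 then 0 else 1)
        (\<lambda>y. (if y = x \<or> y = 1 then 1 else 0, if y = 1 - x \<or> y = 1 then 1 else 0))"
        by (intro alg_iso_Z2xZ2_if_four_elements)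
      with field_iso_Z2_if_two_elements[OF K2] show ?thesis
        by blast
    qed (simp add: scalar_algebra)
  next
    assume "(\<forall>x::'a. \<exists>c::'k. x = scale c 1) \<or>
      (\<exists>\<psi> \<phi>. field_iso_Z2 \<psi> \<and> alg_iso_Z2xZ2 scale \<psi> \<phi>)"
    then show "theta_stable \<theta> scale"
      using theta_stable_if_span_one theta_stable_if_iso_Z2xZ2 scalar_algebra by blast
  qed
qed

end
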